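(* Let $P \subseteq \mathbb{R}^d$ be a full-dimensional polytope and let $s_0 > 0$ be a discontinuity point of $L_P$. If $s_0$ is a left-discontinuity, then $L_P(s_0) - \lim_{s \to s_0^-} L_P(s)$ equals the number of integer points contained in the union of the front facets of $s_0 P$. If $s_0$ is a right-discontinuity, then $L_P(s_0) - \lim_{s \to s_0^+} L_P(s)$ equals the number of integer points contained in the union of the back facets of $s_0 P$.
   Context: For a polytope $P \subseteq \mathbb{R}^d$ and real $s \ge 0$, $L_P(s) = \#(sP \cap \mathbb{Z}^d)$, where $sP = \{sx : x \in P\}$. Write a full-dimensional polytope as $P = \bigcap_{i=1}^n \{x : \langle a_i, x\rangle \le b_i\}$ where $F_i = P \cap \{x : \langle a_i, x\rangle = b_i\}$, $i=1,\dots,n$, are exactly the facets of $P$. The facet $F_i$ is a front facet if $b_i > 0$ and a back facet if $b_i < 0$ (facets with $b_i=0$ are neither). For $s_0>0$, the front (resp. back) facets of $s_0P$ are the sets $s_0F_i$ with $F_i$ a front (resp. back) facet of $P$. *)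

theory Defs
  imports "HOL-Analysis.Analysis"
begin

definition int_points :: "(real^'n) set \<Rightarrow> (real^'n) set" where
  "int_points S = {x \<in> S. \<forall>i. x $ i \<in> \<int>}"

definition lattice_count :: "(real^'n) set \<Rightarrow> real \<Rightarrow> nat" where
  "lattice_count P s = card (int_points ((\<lambda>x. s *\<^sub>R x) ` P))"

end

theory Submission
  imports Defs
begin

text \<open>
  Let \<open>P = {x. \<forall>i<n. a\<^sub>i \<bullet> x \<le> b\<^sub>i}\<close>, so that \<open>z \<in> sP\<close> iff \<open>a\<^sub>i \<bullet> z \<le> s b\<^sub>i\<close> for all \<open>i\<close>.
  As \<open>s \<rightarrow> s\<^sub>0\<close> from the left, each bound \<open>s b\<^sub>i\<close> with \<open>b\<^sub>i > 0\<close> drops strictly below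
  \<open>s\<^sub>0 b\<^sub>i\<close>, while the others do not decrease; so a fixed point \<open>z\<close> eventually lies in \<open>sP\<close>
  iff it lies in \<open>s\<^sub>0P\<close> but on none of its front facets. Only finitely many lattice points lie
  in all \<open>sP\<close> with \<open>s\<close> near \<open>s\<^sub>0\<close>, hence the lattice point sets themselves eventually
  stabilise, and \<open>L\<^sub>P\<close> is eventually constant with the claimed value. From the right the
  roles are played by the back facets. The argument yields the one-sided limits at every
  \<open>s\<^sub>0 > 0\<close>.
\<close>

lemma finite_int_points:
  assumes "bounded S"
  shows "finite (int_points S)"
proof -
  obtain M where M: "\<And>x. x \<in> S \<Longrightarrow> norm x \<le> M"
    using assms bounded_iff by blast
  have "int_points S \<subseteq> (\<lambda>f. \<chi> i. f i) ` (\<Pi>\<^sub>E i\<in>UNIV. {k \<in> \<int>. \<bar>k\<bar> \<le> M})"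
  proof
    fix x assume "x \<in> int_points S"
    then have "x \<in> S" "\<forall>i. x $ i \<in> \<int>"
      by (auto simp: int_points_def)
    then have "x $ i \<in> {k \<in> \<int>. \<bar>k\<bar> \<le> M}" for i
      using M component_le_norm_cart[of x i] by fastforce
    then show "x \<in> (\<lambda>f. \<chi> i. f i) ` (\<Pi>\<^sub>E i\<in>UNIV. {k \<in> \<int>. \<bar>k\<bar> \<le> M})"
      by (intro image_eqI[of _ _ "\<lambda>i. x $ i"]) auto
  qed
  then show ?thesis
    by (rule finite_subset) (simp add: finite_PiE finite_abs_int_segment)
qed

lemma mem_scaleR_image_iff:
  fixes S :: "'a::real_vector set"
  assumes "s \<noteq> 0"
  shows "z \<in> (\<lambda>x. s *\<^sub>R x) ` S \<longleftrightarrow> z /\<^sub>R s \<in> S"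
  using assms by (auto simp: image_iff intro!: bexI[of _ "z /\<^sub>R s"])

lemma eventually_le_scaled_iff:
  fixes c \<beta> s0 :: real
  assumes lim: "((\<lambda>s. s) \<longlongrightarrow> s0) F"
    and weak: "\<not> Q \<Longrightarrow> eventually (\<lambda>s. s0 * \<beta> \<le> s * \<beta>) F"
    and strict: "Q \<Longrightarrow> eventually (\<lambda>s. s * \<beta> < s0 * \<beta>) F"
  shows "eventually (\<lambda>s. c \<le> s * \<beta> \<longleftrightarrow> c \<le> s0 * \<beta> \<and> \<not> (Q \<and> c = s0 * \<beta>)) F"
proof -
  have lim_\<beta>: "((\<lambda>s. s * \<beta>) \<longlongrightarrow> s0 * \<beta>) F"
    using lim by (rule tendsto_mult_right)
  consider "c < s0 * \<beta>" | "c > s0 * \<beta>" | "c = s0 * \<beta>" "Q" | "c = s0 * \<beta>" "\<not> Q"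
    by linarith
  then show ?thesis
  proof cases
    case 1
    show ?thesis using order_tendstoD(1)[OF lim_\<beta> 1] by eventually_elim (use 1 in auto)
  next
    case 2
    show ?thesis using order_tendstoD(2)[OF lim_\<beta> 2] by eventually_elim (use 2 in auto)
  next
    case 3
    show ?thesis using strict[OF \<open>Q\<close>] by eventually_elim (use 3 in auto)
  next
    case 4
    show ?thesis using weak[OF \<open>\<not> Q\<close>] by eventually_elim (use 4 in auto)
  qed
qed

lemma eventually_mem_scaled_polyhedron_iff:
  fixes a :: "nat \<Rightarrow> 'a::real_inner"
  assumes P: "P = (\<Inter>i\<in>{..<n}. {x. a i \<bullet> x \<le> b i})" and s0: "s0 > 0"
    and lim: "((\<lambda>s. s) \<longlongrightarrow> s0) F"
    and weak: "\<And>i. i < n \<Longrightarrow> \<not> Q i \<Longrightarrow> eventually (\<lambda>s. s0 * b i \<le> s * b i) F"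
    and strict: "\<And>i. i < n \<Longrightarrow> Q i \<Longrightarrow> eventually (\<lambda>s. s * b i < s0 * b i) F"
  shows "eventually (\<lambda>s. z \<in> (\<lambda>x. s *\<^sub>R x) ` P \<longleftrightarrow>
           z \<in> (\<lambda>x. s0 *\<^sub>R x) ` P \<and>
           z \<notin> (\<Union>i\<in>{i. i < n \<and> Q i}. (\<lambda>x. s0 *\<^sub>R x) ` (P \<inter> {x. a i \<bullet> x = b i}))) F"
proof -
  have mem_iff: "z \<in> (\<lambda>x. s *\<^sub>R x) ` P \<longleftrightarrow> (\<forall>i<n. a i \<bullet> z \<le> s * b i)" if "s > 0" for s
    using that by (auto simp: mem_scaleR_image_iff P field_simps)
  have facets_iff: "z \<in> (\<Union>i\<in>{i. i < n \<and> Q i}. (\<lambda>x. s0 *\<^sub>R x) ` (P \<inter> {x. a i \<bullet> x = b i}))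
      \<longleftrightarrow> (\<forall>i<n. a i \<bullet> z \<le> s0 * b i) \<and> (\<exists>i<n. Q i \<and> a i \<bullet> z = s0 * b i)"
    using s0 by (auto simp: mem_scaleR_image_iff P field_simps)
  have "eventually (\<lambda>s. \<forall>i\<in>{..<n}. a i \<bullet> z \<le> s * b i \<longleftrightarrow>
          a i \<bullet> z \<le> s0 * b i \<and> \<not> (Q i \<and> a i \<bullet> z = s0 * b i)) F"
    by (intro eventually_ball_finite finite_lessThan ballI eventually_le_scaled_iff[OF lim])
      (simp_all add: weak strict)
  moreover have "eventually (\<lambda>s. s > 0) F"
    using order_tendstoD(1)[OF lim s0] .
  ultimately show ?thesis
    unfolding facets_iff mem_iff[OF s0] by eventually_elim (auto simp: mem_iff)
qed

lemma eventually_set_eq_if_eventually_mem_iff: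
  assumes "finite K" and "eventually (\<lambda>s. A s \<subseteq> K) F" and "B \<subseteq> K"
    and "\<And>z. z \<in> K \<Longrightarrow> eventually (\<lambda>s. z \<in> A s \<longleftrightarrow> z \<in> B) F"
  shows "eventually (\<lambda>s. A s = B) F"
proof -
  have "eventually (\<lambda>s. \<forall>z\<in>K. z \<in> A s \<longleftrightarrow> z \<in> B) F"
    using assms(1,4) by (simp add: eventually_ball_finite)
  with assms(2) show ?thesis
    by eventually_elim (use \<open>B \<subseteq> K\<close> in blast)
qed

lemma tendsto_lattice_count:
  fixes a :: "nat \<Rightarrow> real^'n"
  assumes "bounded P" and P: "P = (\<Inter>i\<in>{..<n}. {x. a i \<bullet> x \<le> b i})" and s0: "s0 > 0"
    and lim: "((\<lambda>s. s) \<longlongrightarrow> s0) F"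
    and weak: "\<And>i. i < n \<Longrightarrow> \<not> Q i \<Longrightarrow> eventually (\<lambda>s. s0 * b i \<le> s * b i) F"
    and strict: "\<And>i. i < n \<Longrightarrow> Q i \<Longrightarrow> eventually (\<lambda>s. s * b i < s0 * b i) F"
  shows "((\<lambda>s. real (lattice_count P s)) \<longlongrightarrow> real (lattice_count P s0) -
           real (card (int_points (\<Union>i\<in>{i. i < n \<and> Q i}.
             (\<lambda>x. s0 *\<^sub>R x) ` (P \<inter> {x. a i \<bullet> x = b i}))))) F"
proof -
  let ?U = "\<Union>i\<in>{i. i < n \<and> Q i}. (\<lambda>x. s0 *\<^sub>R x) ` (P \<inter> {x. a i \<bullet> x = b i})"
  obtain M where "M > 0" and M: "\<And>x. x \<in> P \<Longrightarrow> norm x \<le> M"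
    using \<open>bounded P\<close> bounded_pos by blast
  define K where "K = int_points (cball (0::real^'n) (2 * s0 * M))"
  have int_points_in_K: "int_points ((\<lambda>x. s *\<^sub>R x) ` P) \<subseteq> K" if "0 < s" "s < 2 * s0" for s
  proof -
    have "s * norm x \<le> 2 * s0 * M" if "x \<in> P" for x
      using M[OF that] \<open>M > 0\<close> \<open>0 < s\<close> \<open>s < 2 * s0\<close> by (intro mult_mono) auto
    then show ?thesis
      using \<open>0 < s\<close> by (auto simp: K_def int_points_def)
  qed
  have "eventually (\<lambda>s. 0 < s) F" "eventually (\<lambda>s. s < 2 * s0) F"
    using order_tendstoD(1)[OF lim s0] order_tendstoD(2)[OF lim, of "2 * s0"] s0 by simp_all
  then have "eventually (\<lambda>s. int_points ((\<lambda>x. s *\<^sub>R x) ` P) \<subseteq> K) F"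
    by eventually_elim (rule int_points_in_K)
  moreover have "int_points ((\<lambda>x. s0 *\<^sub>R x) ` P) - int_points ?U \<subseteq> K"
    using int_points_in_K[of s0] s0 by (simp add: Diff_subset_conv le_supI2)
  moreover have "eventually (\<lambda>s. z \<in> int_points ((\<lambda>x. s *\<^sub>R x) ` P) \<longleftrightarrow>
                  z \<in> int_points ((\<lambda>x. s0 *\<^sub>R x) ` P) - int_points ?U) F" for z
  proof -
    have "eventually (\<lambda>s. z \<in> (\<lambda>x. s *\<^sub>R x) ` P \<longleftrightarrow>
                       z \<in> (\<lambda>x. s0 *\<^sub>R x) ` P \<and> z \<notin> ?U) F"
      using P s0 lim weak strict by (rule eventually_mem_scaled_polyhedron_iff)
    then show ?thesis
      by eventually_elim (simp only: int_points_def mem_Collect_eq Diff_iff, blast)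
  qed
  ultimately have stable: "eventually (\<lambda>s. int_points ((\<lambda>x. s *\<^sub>R x) ` P) =
                     int_points ((\<lambda>x. s0 *\<^sub>R x) ` P) - int_points ?U) F"
    by (intro eventually_set_eq_if_eventually_mem_iff[where K = K])
       (simp_all add: K_def finite_int_points)
  have card_eq: "real (card (int_points ((\<lambda>x. s0 *\<^sub>R x) ` P) - int_points ?U)) =
                   real (lattice_count P s0) - real (card (int_points ?U))"
  proof -
    have finite: "finite (int_points ((\<lambda>x. s0 *\<^sub>R x) ` P))"
      by (intro finite_int_points bounded_scaling \<open>bounded P\<close>)
    have sub: "int_points ?U \<subseteq> int_points ((\<lambda>x. s0 *\<^sub>R x) ` P)"
      by (auto simp: int_points_def)
    show ?thesis
      using card_Diff_subset[OF finite_subset[OF sub finite] sub] card_mono[OF finite sub]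
      by (simp add: lattice_count_def of_nat_diff)
  qed
  from stable have "eventually (\<lambda>s. real (lattice_count P s) =
      real (lattice_count P s0) - real (card (int_points ?U))) F"
    by eventually_elim (simp only: lattice_count_def card_eq[unfolded lattice_count_def])
  then show ?thesis
    by (rule tendsto_eventually)
qed

theorem lemma3p1:
  fixes P :: "(real^'n) set" and n :: nat
    and a :: "nat \<Rightarrow> real^'n" and b :: "nat \<Rightarrow> real" and s0 :: real
  assumes "polytope P"
    and "aff_dim P = int CARD('n)"
    and "P = (\<Inter>i\<in>{..<n}. {x. a i \<bullet> x \<le> b i})"
    and "\<forall>i<n. (P \<inter> {x. a i \<bullet> x = b i}) facet_of P"
    and "\<forall>F. F facet_of P \<longrightarrow> (\<exists>i<n. F = P \<inter> {x. a i \<bullet> x = b i})"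
    and "s0 > 0"
    and "\<not> isCont (\<lambda>s. real (lattice_count P s)) s0"
  shows "(\<not> continuous (at_left s0) (\<lambda>s. real (lattice_count P s)) \<longrightarrow>
            ((\<lambda>s. real (lattice_count P s)) \<longlongrightarrow>
               real (lattice_count P s0)
               - real (card (int_points (\<Union>i\<in>{i. i < n \<and> b i > 0}.
                     (\<lambda>x. s0 *\<^sub>R x) ` (P \<inter> {x. a i \<bullet> x = b i}))))) (at_left s0))
       \<and> (\<not> continuous (at_right s0) (\<lambda>s. real (lattice_count P s)) \<longrightarrow>
            ((\<lambda>s. real (lattice_count P s)) \<longlongrightarrow>
               real (lattice_count P s0)
               - real (card (int_points (\<Union>i\<in>{i. i < n \<and> b i < 0}.
                     (\<lambda>x. s0 *\<^sub>R x) ` (P \<inter> {x. a i \<bullet> x = b i}))))) (at_right s0))"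
proof -
  have "bounded P"
    using \<open>polytope P\<close> by (rule polytope_imp_bounded)
  have left: "eventually (\<lambda>s. s < s0) (at_left s0)"
    by (simp add: eventually_at_filter)
  have right: "eventually (\<lambda>s. s > s0) (at_right s0)"
    by (simp add: eventually_at_filter)
  have "((\<lambda>s. real (lattice_count P s)) \<longlongrightarrow> real (lattice_count P s0) -
          real (card (int_points (\<Union>i\<in>{i. i < n \<and> b i > 0}.
            (\<lambda>x. s0 *\<^sub>R x) ` (P \<inter> {x. a i \<bullet> x = b i}))))) (at_left s0)"
  proof (rule tendsto_lattice_count[OF \<open>bounded P\<close> assms(3,6) tendsto_ident_at])
    show "eventually (\<lambda>s. s0 * b i \<le> s * b i) (at_left s0)" if "\<not> b i > 0" for i
      using left by eventually_elim (use that in \<open>auto intro: mult_right_mono_neg\<close>)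
    show "eventually (\<lambda>s. s * b i < s0 * b i) (at_left s0)" if "b i > 0" for i
      using left by eventually_elim (use that in auto)
  qed
  moreover have "((\<lambda>s. real (lattice_count P s)) \<longlongrightarrow> real (lattice_count P s0) -
          real (card (int_points (\<Union>i\<in>{i. i < n \<and> b i < 0}.
            (\<lambda>x. s0 *\<^sub>R x) ` (P \<inter> {x. a i \<bullet> x = b i}))))) (at_right s0)"
  proof (rule tendsto_lattice_count[OF \<open>bounded P\<close> assms(3,6) tendsto_ident_at])
    show "eventually (\<lambda>s. s0 * b i \<le> s * b i) (at_right s0)" if "\<not> b i < 0" for i
      using right by eventually_elim (use that in \<open>auto intro: mult_right_mono\<close>)
    show "eventually (\<lambda>s. s * b i < s0 * b i) (at_right s0)" if "b i < 0" for i
      using right by eventually_elim (use that in auto)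
  qed
  ultimately show ?thesis
    by blast
qed

end
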